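(* Let $p$ be an odd prime and $k\ge 0$. For every $s\ge 1$, every $0\le l<p^k$ and every $0\le l'<p^{k+1}$, $$\sum_{P\in\mathcal P(V_{s,l})}(-1)^{\mathrm{inv}(P)}=0\qquad\text{and}\qquad \sum_{P\in\mathcal P(W_{s+1,l'})}(-1)^{\mathrm{inv}(P)}=0 .$$
   Context: Fix an odd prime $p$ and an integer $k\ge 0$. For integers $0\le i<n$ write $\lambda(n,i)=(n-i,1^i)$ for the hook partition of $n$ with $n-i$ boxes in its first row and $i$ further boxes in its first column. If $\mu=\lambda(n',i')$ is obtained from $\lambda(n,i)$ by appending $m=(n'-i')-(n-i)\ge 0$ boxes to the first row and $n''=i'-i\ge 0$ boxes to the first column, we say $\mu$ is obtained by adding the block $B_{m,n''}$ ($m$ horizontal nodes, $n''$ vertical nodes). Put $x_s=p^k(sp-(s+1))$. The relevant part ("column $k$") of the $p$-Bratteli diagram is the graded directed graph with vertices: on floor $2k+1$, $S_i=\lambda(p^k(p-1),i)$ for $0\le i<p^k(p-1)$; on floor $2(k+s)$ ($s\ge1$), $V_{s,l}=\lambda\big(p^k(2sp-(2s+1)),\,x_s+l\big)$ for $0\le l<p^k$; on floor $2(k+s)-1$ ($s\ge2$), $W_{s,l'}=\lambda\big(p^k((2s-1)p-2s),\,x_{s-1}+l'\big)$ for $0\le l'<p^{k+1}$; and edges, each labelled by the block added: (E1) $S_i\to V_{1,l}$ exactly when $i=p^kt+l$ with $0\le t\le p-2$, block $B_{p^kt,\,p^k(p-2-t)}$; (E2) for $s\ge2$, $0\le l<p^k$,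 $0\le\beta\le p-1$: $V_{s-1,l}\to W_{s,pl+\beta}$, block $B_{p^k(p-1)-((p-1)l+\beta),\,(p-1)l+\beta}$; (E3) for $s\ge 2$, $0\le l'<p^{k+1}$ and $t=\lfloor l'/p^k\rfloor$: $W_{s,l'}\to V_{s,l'-p^kt}$, block $B_{p^kt,\,p^k(p-1-t)}$. A path ending at a vertex $v$ is a sequence of edges starting at some $S_i$ and going up one floor at a time to $v$ ($S_i\to V_{1,\cdot}\to W_{2,\cdot}\to V_{2,\cdot}\to W_{3,\cdot}\to\cdots\to v$); $\mathcal P(v)$ is the set of all paths ending at $v$. The blocks of a path are numbered $B^2,B^3,\dots,B^N$: $B^2$ is the block of the edge leaving $S_i$, and for $j\ge2$, $B^{2j-1}$ is the block of the edge into $W_{j,\cdot}$ and $B^{2j}$ the block of the edge into $V_{j,\cdot}$. Write $B^j=B_{m_j,n_j}$. Inversions: $(1,2)\in\mathrm{Inv}(P)$ iff $m_2=p^kt$ with $0\le t<\frac{p-1}{2}$; for $3\le i<j\le N$, $(i,j)\in\mathrm{Inv}(P)$ iff $m_i>m_j$ and $n_i<n_j$; no other pairs are inversions. $\mathrm{inv}(P)=|\mathrm{Inv}(P)|$. *)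

theory Defs
  imports "HOL-Computational_Algebra.Primes"
begin

text \<open>Vertices of column k of the p-Bratteli diagram:
  S i  = S_i (floor 2k+1),  V s l = V_{s,l} (floor 2(k+s)),  W s l' = W_{s,l'} (floor 2(k+s)-1).\<close>
datatype vert = S nat | V nat nat | W nat nat

text \<open>A block B_{m,n} is recorded as the pair (m, n): m horizontal, n vertical nodes.
  A labelled edge is a triple (source, target, block).\<close>
type_synonym ledge = "vert \<times> vert \<times> (nat \<times> nat)"

definition bedge :: "nat \<Rightarrow> nat \<Rightarrow> ledge \<Rightarrow> bool" where
  "bedge p k e \<longleftrightarrow>
     (\<exists>i l t. e = (S i, V 1 l, (p^k * t, p^k * (p - 2 - t)))
              \<and> i = p^k * t + l \<and> t \<le> p - 2 \<and> l < p^k)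
   \<or> (\<exists>s l \<beta>. s \<ge> 2 \<and> l < p^k \<and> \<beta> \<le> p - 1 \<and>
        e = (V (s - 1) l, W s (p * l + \<beta>),
             (p^k * (p - 1) - ((p - 1) * l + \<beta>), (p - 1) * l + \<beta>)))
   \<or> (\<exists>s l' t. s \<ge> 2 \<and> l' < p^(k+1) \<and> t = l' div p^k \<and>
        e = (W s l', V s (l' - p^k * t), (p^k * t, p^k * (p - 1 - t))))"

definition src :: "ledge \<Rightarrow> vert" where "src e = fst e"
definition tgt :: "ledge \<Rightarrow> vert" where "tgt e = fst (snd e)"
definition blk :: "ledge \<Rightarrow> nat \<times> nat" where "blk e = snd (snd e)"

definition is_path :: "nat \<Rightarrow> nat \<Rightarrow> vert \<Rightarrow> ledge list \<Rightarrow> bool" where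
  "is_path p k v P \<longleftrightarrow> P \<noteq> [] \<and> (\<forall>e\<in>set P. bedge p k e)
     \<and> (\<exists>i. src (hd P) = S i)
     \<and> (\<forall>j. Suc j < length P \<longrightarrow> tgt (P ! j) = src (P ! Suc j))
     \<and> tgt (last P) = v"

definition paths :: "nat \<Rightarrow> nat \<Rightarrow> vert \<Rightarrow> ledge list set" where
  "paths p k v = {P. is_path p k v P}"

text \<open>Blocks numbered B^2, ..., B^N with N = length P + 1: B^j is the block of edge number j-2.\<close>
definition hm :: "ledge list \<Rightarrow> nat \<Rightarrow> nat" where "hm P j = fst (blk (P ! (j - 2)))"
definition vn :: "ledge list \<Rightarrow> nat \<Rightarrow> nat" where "vn P j = snd (blk (P ! (j - 2)))"

definition Inv :: "nat \<Rightarrow> nat \<Rightarrow> ledge list \<Rightarrow> (nat \<times> nat) set" where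
  "Inv p k P =
     {(i, j). i = 1 \<and> j = 2 \<and> (\<exists>t. hm P 2 = p^k * t \<and> 2 * t < p - 1)}
   \<union> {(i, j). 3 \<le> i \<and> i < j \<and> j \<le> length P + 1 \<and> hm P i > hm P j \<and> vn P i < vn P j}"

definition inv :: "nat \<Rightarrow> nat \<Rightarrow> ledge list \<Rightarrow> nat" where
  "inv p k P = card (Inv p k P)"

end

theory Submission
  imports Defs "HOL-Library.Disjoint_Sets"
begin

(* The first block B^2 = B_{p^k t, p^k (p-2-t)} of a path enters the inversion count only
   through the pair (1,2), which is an inversion iff t lies in the lower half of {0..p-2}.
   Replacing the first edge S_{p^k t + l} -> V_{1,l} by S_{p^k t' + l} -> V_{1,l}, where
   t' = t +- (p-1)/2 lies in the other half, is therefore a sign-reversing involution on the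
   paths ending at any fixed vertex, so the signed count vanishes.  Finiteness holds because
   a path has as many edges as its endpoint is floors above floor 2k+1. *)

lemma finite_image_set3:
  assumes "finite {x. P x}" "finite {y. Q y}" "finite {z. R z}"
  shows "finite {f x y z | x y z. P x \<and> Q y \<and> R z}"
  using finite_image_set2[of P "\<lambda>(y, z). Q y \<and> R z" "\<lambda>x (y, z). f x y z"] assms
  by simp

lemma card_eq_card_Diff_singleton_plus:
  "finite A \<Longrightarrow> card A = card (A - {x}) + of_bool (x \<in> A)"
  using card_Suc_Diff1[of A x] by (cases "x \<in> A") auto

lemma power_neg_one_card_toggle:
  assumes "finite A" "finite B" "A - {x} = B - {x}" "x \<in> A \<longleftrightarrow> x \<notin> B"
  shows "(-1::int) ^ card A = - ((-1) ^ card B)"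
proof -
  define n where "n = card (A - {x})"
  have "card A = n + of_bool (x \<in> A)"
    unfolding n_def by (rule card_eq_card_Diff_singleton_plus[OF assms(1)])
  moreover have "card B = n + of_bool (x \<notin> A)"
    unfolding n_def using card_eq_card_Diff_singleton_plus[OF assms(2), of x] assms(3,4) by simp
  ultimately show ?thesis
    by (cases "x \<in> A") simp_all
qed

(* The floor of a vertex, counted from floor 2k+1. *)
fun height :: "vert \<Rightarrow> nat" where
  "height (S i) = 0"
| "height (V s l) = 2 * s - 1"
| "height (W s l) = 2 * s - 2"

lemma bedge_height: "bedge p k e \<Longrightarrow> height (tgt e) = Suc (height (src e))"
  by (auto simp: bedge_def src_def tgt_def)

lemma is_path_height_nth:
  assumes "is_path p k v P" "j < length P"
  shows "height (tgt (P ! j)) = Suc j"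
  using assms(2)
proof (induction j)
  case 0
  from assms(1) obtain i where "src (P ! 0) = S i" "bedge p k (P ! 0)"
    by (metis 0 hd_conv_nth is_path_def nth_mem)
  then show ?case using bedge_height by fastforce
next
  case (Suc j)
  with assms(1) have "bedge p k (P ! Suc j)" "tgt (P ! j) = src (P ! Suc j)"
    by (auto simp: is_path_def)
  then show ?case using bedge_height Suc by fastforce
qed

lemma length_path: "is_path p k v P \<Longrightarrow> length P = height v"
  using is_path_height_nth[of p k v P "length P - 1"]
  by (auto simp: is_path_def last_conv_nth)

definition s_edge :: "nat \<Rightarrow> nat \<Rightarrow> nat \<Rightarrow> nat \<Rightarrow> ledge" where
  "s_edge p k t l = (S (p^k * t + l), V 1 l, (p^k * t, p^k * (p - 2 - t)))"

lemma bedge_s_edge: "t \<le> p - 2 \<Longrightarrow> l < p^k \<Longrightarrow> bedge p k (s_edge p k t l)"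
  by (auto simp: bedge_def s_edge_def)

lemma bedge_from_SE:
  assumes "bedge p k e" "src e = S i"
  obtains t l where "e = s_edge p k t l" "t \<le> p - 2" "l < p^k"
  using assms by (auto simp: bedge_def src_def s_edge_def)

lemma finite_bedges_below:
  "finite {e. bedge p k e \<and> height (tgt e) \<le> N}"
proof (rule finite_subset)
  have finite_s: "finite {s. 2 * s - c \<le> N}" for c
    by (rule finite_subset[of _ "{..N + c}"]) auto
  show "{e. bedge p k e \<and> height (tgt e) \<le> N} \<subseteq>
      {s_edge p k t l | t l. t \<le> p - 2 \<and> l < p^k}
    \<union> {(V (s - 1) l, W s (p * l + \<beta>), (p^k * (p - 1) - ((p - 1) * l + \<beta>), (p - 1) * l + \<beta>))
        | s l \<beta>. 2 * s - 2 \<le> N \<and> l < p^k \<and> \<beta> \<le> p - 1}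
    \<union> {(W s l', V s (l' - p^k * (l' div p^k)), (p^k * (l' div p^k), p^k * (p - 1 - l' div p^k)))
        | s l'. 2 * s - 1 \<le> N \<and> l' < p^(k+1)}"
    unfolding bedge_def s_edge_def
    by (intro subsetI, elim CollectE conjE disjE exE)
       (simp only: tgt_def fst_conv snd_conv height.simps; blast)+
  with finite_s show "finite \<dots>"
    by (intro finite_UnI finite_image_set2 finite_image_set3) auto
qed

lemma finite_paths: "finite (paths p k v)"
proof (rule finite_subset)
  let ?E = "{e. bedge p k e \<and> height (tgt e) \<le> height v}"
  show "paths p k v \<subseteq> {P. set P \<subseteq> ?E \<and> length P = height v}"
  proof
    fix P assume "P \<in> paths p k v"
    then have P: "is_path p k v P" by (simp add: paths_def)
    have "e \<in> ?E" if "e \<in> set P" for e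
    proof -
      from that obtain j where "j < length P" "e = P ! j" by (auto simp: in_set_conv_nth)
      with P that show ?thesis
        using is_path_height_nth[OF P] length_path[OF P] by (auto simp: is_path_def)
    qed
    then show "P \<in> {P. set P \<subseteq> ?E \<and> length P = height v}"
      using length_path[OF P] by auto
  qed
  show "finite {P. set P \<subseteq> ?E \<and> length P = height v}"
    by (rule finite_lists_length_eq[OF finite_bedges_below])
qed

definition opposite_slot :: "nat \<Rightarrow> nat \<Rightarrow> nat" where
  "opposite_slot p t = (if 2 * t < p - 1 then t + (p - 1) div 2 else t - (p - 1) div 2)"

lemma opposite_slot:
  assumes "odd p" "1 < p" "t \<le> p - 2"
  shows opposite_slot_le: "opposite_slot p t \<le> p - 2"
    and opposite_slot_opposite_slot: "opposite_slot p (opposite_slot p t) = t"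
    and opposite_slot_lower_half_iff: "2 * opposite_slot p t < p - 1 \<longleftrightarrow> \<not> 2 * t < p - 1"
  using assms by (auto elim!: oddE simp: opposite_slot_def)

definition flip_first_edge :: "nat \<Rightarrow> nat \<Rightarrow> ledge \<Rightarrow> ledge" where
  "flip_first_edge p k e =
     (case tgt e of V _ l \<Rightarrow> s_edge p k (opposite_slot p (fst (blk e) div p^k)) l | _ \<Rightarrow> e)"

fun flip_path :: "nat \<Rightarrow> nat \<Rightarrow> ledge list \<Rightarrow> ledge list" where
  "flip_path p k [] = []"
| "flip_path p k (e # R) = flip_first_edge p k e # R"

lemma flip_path_s_edge_Cons:
  "0 < p \<Longrightarrow> flip_path p k (s_edge p k t l # R) = s_edge p k (opposite_slot p t) l # R"
  by (simp add: flip_first_edge_def s_edge_def tgt_def blk_def)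

lemma is_path_first_edgeE:
  assumes "is_path p k v P"
  obtains t l R where "P = s_edge p k t l # R" "t \<le> p - 2" "l < p^k"
proof -
  obtain e R where "P = e # R" using assms by (cases P) (auto simp: is_path_def)
  with assms obtain i where "bedge p k e" "src e = S i" by (auto simp: is_path_def)
  then show ?thesis using \<open>P = e # R\<close> that by (auto elim: bedge_from_SE)
qed

lemma is_path_replace_first:
  assumes "is_path p k v (e # R)" "bedge p k e'" "src e' = S i" "tgt e' = tgt e"
  shows "is_path p k v (e' # R)"
  using assms unfolding is_path_def by (auto simp: nth_Cons split: nat.splits)

lemma finite_Inv: "finite (Inv p k P)"
  by (rule finite_subset[of _ "{..length P + 2} \<times> {..length P + 2}"]) (auto simp: Inv_def)

lemma Inv_Cons_Diff_first: "Inv p k (e # R) - {(1, 2)} = Inv p k (e' # R) - {(1, 2)}"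
proof -
  have "hm (e # R) i = hm (e' # R) i" "vn (e # R) i = vn (e' # R) i" if "3 \<le> i" for i
    using that by (simp_all add: hm_def vn_def nth_Cons')
  then show ?thesis by (auto simp: Inv_def)
qed

lemma first_pair_in_Inv_iff:
  "0 < p \<Longrightarrow> (1, 2) \<in> Inv p k (s_edge p k t l # R) \<longleftrightarrow> 2 * t < p - 1"
  by (auto simp: Inv_def hm_def blk_def s_edge_def)

lemma flip_path:
  assumes "odd p" "1 < p" "is_path p k v P"
  shows is_path_flip_path: "is_path p k v (flip_path p k P)"
    and flip_path_flip_path: "flip_path p k (flip_path p k P) = P"
    and sign_flip_path: "(-1::int) ^ inv p k (flip_path p k P) = - ((-1) ^ inv p k P)"
proof -
  obtain t l R where P: "P = s_edge p k t l # R" and t: "t \<le> p - 2" and l: "l < p^k"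
    using assms(3) by (rule is_path_first_edgeE)
  have p: "0 < p"
    using assms(2) by simp
  have flip: "flip_path p k P = s_edge p k (opposite_slot p t) l # R"
    unfolding P by (rule flip_path_s_edge_Cons[OF p])
  have "bedge p k (s_edge p k (opposite_slot p t) l)"
    using opposite_slot_le[OF assms(1,2) t] l by (rule bedge_s_edge)
  with assms(3)[unfolded P] show "is_path p k v (flip_path p k P)"
    unfolding flip by (rule is_path_replace_first) (simp_all add: s_edge_def src_def tgt_def)
  show "flip_path p k (flip_path p k P) = P"
    unfolding flip flip_path_s_edge_Cons[OF p] opposite_slot_opposite_slot[OF assms(1,2) t] P ..
  show "(-1::int) ^ inv p k (flip_path p k P) = - ((-1) ^ inv p k P)"
    unfolding inv_def flip unfolding P
    by (intro power_neg_one_card_toggle[where x = "(1, 2)"] finite_Inv Inv_Cons_Diff_first)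
       (simp only: first_pair_in_Inv_iff[OF p] opposite_slot_lower_half_iff[OF assms(1,2) t])
qed

lemma sum_sign_paths_eq_0:
  assumes "odd p" "1 < p"
  shows "(\<Sum>P\<in>paths p k v. (-1::int) ^ inv p k P) = 0"
proof (rule sum_involution_eq_0[where h = "flip_path p k"])
  fix P assume "P \<in> paths p k v"
  then have P: "is_path p k v P" by (simp add: paths_def)
  show "(-1::int) ^ inv p k (flip_path p k P) + (-1) ^ inv p k P = 0"
    using sign_flip_path[OF assms P] by simp
  show "flip_path p k P \<in> paths p k v"
    using is_path_flip_path[OF assms P] by (simp add: paths_def)
  show "flip_path p k (flip_path p k P) = P"
    using flip_path_flip_path[OF assms P] .
  show "flip_path p k P \<noteq> P"
    using sign_flip_path[OF assms P] by force
qed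

theorem mainTheorem1:
  fixes p k s l l' :: nat
  assumes "prime p" and "odd p" and "1 \<le> s" and "l < p ^ k" and "l' < p ^ (k + 1)"
  shows "finite (paths p k (V s l))
       \<and> (\<Sum>P\<in>paths p k (V s l). (-1::int) ^ inv p k P) = 0
       \<and> finite (paths p k (W (s + 1) l'))
       \<and> (\<Sum>P\<in>paths p k (W (s + 1) l'). (-1::int) ^ inv p k P) = 0"
  using finite_paths sum_sign_paths_eq_0[OF \<open>odd p\<close> prime_gt_1_nat[OF \<open>prime p\<close>]] by blast

end
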